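(* Let $S$ be a semigroup with a subsemigroup $T$ such that $S\setminus T$ is an ideal of $S$. If $S$ is finitely right equated then so is $T$.
   Context: For a semigroup $S$ and $a\in S$, $\mathbf{r}_S(a)=\{(s,t)\in S\times S\mid as=at\}$; $S$ is finitely right equated if each $\mathbf{r}_S(a)$ is finitely generated as a right congruence (the smallest right congruence containing some finite set). *)

theory Defs
  imports Main
begin

text \<open>Semigroups are subsets of an ambient type with an associative multiplication
(class semigroup_mult) that are closed under multiplication.\<close>

definition subsemigroup :: "'a::semigroup_mult set \<Rightarrow> bool" where
  "subsemigroup A \<longleftrightarrow> (\<forall>x\<in>A. \<forall>y\<in>A. x * y \<in> A)"

definition semigroup_ideal :: "'a::semigroup_mult set \<Rightarrow> 'a set \<Rightarrow> bool" where
  "semigroup_ideal S I \<longleftrightarrow> I \<subseteq> S \<and> (\<forall>x\<in>I. \<forall>s\<in>S. s * x \<in> I \<and> x * s \<in> I)"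

definition right_congruence :: "'a::semigroup_mult set \<Rightarrow> ('a \<times> 'a) set \<Rightarrow> bool" where
  "right_congruence S \<rho> \<longleftrightarrow> equiv S \<rho> \<and>
     (\<forall>s t u. (s, t) \<in> \<rho> \<longrightarrow> u \<in> S \<longrightarrow> (s * u, t * u) \<in> \<rho>)"

definition right_congruence_gen :: "'a::semigroup_mult set \<Rightarrow> ('a \<times> 'a) set \<Rightarrow> ('a \<times> 'a) set" where
  "right_congruence_gen S X = \<Inter>{\<rho>. right_congruence S \<rho> \<and> X \<subseteq> \<rho>}"

definition fg_right_congruence :: "'a::semigroup_mult set \<Rightarrow> ('a \<times> 'a) set \<Rightarrow> bool" where
  "fg_right_congruence S \<rho> \<longleftrightarrow>
     (\<exists>X. finite X \<and> X \<subseteq> S \<times> S \<and> \<rho> = right_congruence_gen S X)"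

definition r_ann :: "'a::semigroup_mult set \<Rightarrow> 'a \<Rightarrow> ('a \<times> 'a) set" where
  "r_ann S a = {(s, t). s \<in> S \<and> t \<in> S \<and> a * s = a * t}"

definition finitely_right_equated :: "'a::semigroup_mult set \<Rightarrow> bool" where
  "finitely_right_equated S \<longleftrightarrow> (\<forall>a\<in>S. fg_right_congruence S (r_ann S a))"

end

theory Submission
  imports Defs
begin

text \<open>Let \<open>a \<in> T\<close> and let \<open>r\<^sub>S(a)\<close> be generated by a finite \<open>X\<close>. Because \<open>S - T\<close> is an ideal,
  \<open>p * u \<in> T\<close> forces \<open>p, u \<in> T\<close>. Hence if \<open>\<rho>\<close> is the right congruence on \<open>T\<close> generated by
  \<open>X \<inter> T \<times> T\<close>, the pairs \<open>(s, t) \<in> r\<^sub>S(a)\<close> with \<open>a s \<in> T \<Longrightarrow> (s, t) \<in> \<rho>\<close> form a right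
  congruence on \<open>S\<close> containing \<open>X\<close>, so they contain \<open>r\<^sub>S(a)\<close>. For \<open>s, t \<in> T\<close> we have
  \<open>a s \<in> T\<close>, which shows \<open>r\<^sub>T(a) \<subseteq> \<rho>\<close>; the converse inclusion is clear.\<close>

lemma right_congruence_Inter:
  assumes "\<F> \<noteq> {}" and "\<And>\<rho>. \<rho> \<in> \<F> \<Longrightarrow> right_congruence S \<rho>"
  shows "right_congruence S (\<Inter>\<F>)"
proof -
  have "equiv S \<rho>" if "\<rho> \<in> \<F>" for \<rho>
    using assms(2)[OF that] by (simp add: right_congruence_def)
  then have "equiv S (\<Inter>\<F>)"
    using assms(1) unfolding equiv_def refl_on_def sym_def trans_def by blast
  moreover have "(s * u, t * u) \<in> \<Inter>\<F>" if "(s, t) \<in> \<Inter>\<F>" "u \<in> S" for s t u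
    using that assms(2) by (auto simp: right_congruence_def)
  ultimately show ?thesis
    by (simp add: right_congruence_def)
qed

lemma right_congruence_full:
  assumes "subsemigroup S"
  shows "right_congruence S (S \<times> S)"
  using assms by (auto simp: right_congruence_def subsemigroup_def equiv_def refl_on_def sym_def trans_def)

lemma right_congruence_right_congruence_gen:
  assumes "subsemigroup S" and "X \<subseteq> S \<times> S"
  shows "right_congruence S (right_congruence_gen S X)"
  unfolding right_congruence_gen_def
  using assms right_congruence_full by (intro right_congruence_Inter) auto

lemma right_congruence_gen_upper: "X \<subseteq> right_congruence_gen S X"
  unfolding right_congruence_gen_def by blast

lemma right_congruence_gen_least:
  "right_congruence S \<rho> \<Longrightarrow> X \<subseteq> \<rho> \<Longrightarrow> right_congruence_gen S X \<subseteq> \<rho>"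
  unfolding right_congruence_gen_def by blast

lemma right_congruence_r_ann:
  assumes "subsemigroup S"
  shows "right_congruence S (r_ann S a)"
  using assms
  by (auto simp: right_congruence_def r_ann_def subsemigroup_def equiv_def refl_on_def sym_def
      trans_def mult.assoc[symmetric])

lemma mult_in_complement_ideal_factors:
  assumes "semigroup_ideal S (S - T)" and "p \<in> S" and "u \<in> S" and "p * u \<in> T"
  shows "p \<in> T" and "u \<in> T"
  using assms unfolding semigroup_ideal_def by blast+

definition r_ann_refined :: "'a::semigroup_mult set \<Rightarrow> 'a set \<Rightarrow> 'a \<Rightarrow> ('a \<times> 'a) set \<Rightarrow> ('a \<times> 'a) set"
  where "r_ann_refined S T a \<rho> = {(s, t) \<in> r_ann S a. a * s \<in> T \<longrightarrow> (s, t) \<in> \<rho>}"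

lemma right_congruence_r_ann_refined:
  assumes "subsemigroup S" and "semigroup_ideal S (S - T)" and "a \<in> S"
    and "right_congruence T \<rho>"
  shows "right_congruence S (r_ann_refined S T a \<rho>)"
proof -
  note factors = mult_in_complement_ideal_factors[OF assms(2)]
  have \<rho>: "refl_on T \<rho>" "sym \<rho>" "trans \<rho>"
    "\<And>s t u. (s, t) \<in> \<rho> \<Longrightarrow> u \<in> T \<Longrightarrow> (s * u, t * u) \<in> \<rho>"
    using assms(4) by (simp_all add: right_congruence_def equiv_def)
  have "equiv S (r_ann_refined S T a \<rho>)"
  proof (rule equivI)
    show "r_ann_refined S T a \<rho> \<subseteq> S \<times> S"
      by (auto simp: r_ann_refined_def r_ann_def)
    show "refl_on S (r_ann_refined S T a \<rho>)"
      using factors[OF assms(3)] \<rho>(1)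
      by (auto simp: refl_on_def r_ann_refined_def r_ann_def)
    show "sym (r_ann_refined S T a \<rho>)"
      using \<rho>(2) by (auto simp: sym_def r_ann_refined_def r_ann_def)
    show "trans (r_ann_refined S T a \<rho>)"
      using \<rho>(3) unfolding trans_def by (auto simp: r_ann_refined_def r_ann_def)
  qed
  moreover have "(s * u, t * u) \<in> r_ann_refined S T a \<rho>"
    if st: "(s, t) \<in> r_ann_refined S T a \<rho>" and u: "u \<in> S" for s t u
  proof -
    have "(s * u, t * u) \<in> r_ann S a"
      using st u right_congruence_r_ann[OF assms(1)]
      by (simp add: r_ann_refined_def right_congruence_def)
    moreover have "(s * u, t * u) \<in> \<rho>" if "a * (s * u) \<in> T"
    proof -
      have "a * s \<in> S"
        using assms(1,3) st by (auto simp: subsemigroup_def r_ann_refined_def r_ann_def)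
      with that u have "a * s \<in> T" "u \<in> T"
        using factors[of "a * s" u] by (simp_all add: mult.assoc)
      then show ?thesis
        using st \<rho>(4) by (simp add: r_ann_refined_def)
    qed
    ultimately show ?thesis
      by (simp add: r_ann_refined_def)
  qed
  ultimately show ?thesis
    by (simp add: right_congruence_def)
qed

lemma r_ann_eq_right_congruence_gen_restrict:
  assumes "subsemigroup S" and "T \<subseteq> S" and "subsemigroup T"
    and "semigroup_ideal S (S - T)" and "a \<in> T"
    and X: "X \<subseteq> S \<times> S" "r_ann S a = right_congruence_gen S X"
  shows "r_ann T a = right_congruence_gen T (X \<inter> T \<times> T)"
proof
  let ?\<rho> = "right_congruence_gen T (X \<inter> T \<times> T)"
  have "a \<in> S"
    using assms(2,5) by blast
  have X_r_ann: "X \<subseteq> r_ann S a"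
    using X(2) right_congruence_gen_upper by metis
  then have "X \<inter> T \<times> T \<subseteq> r_ann T a"
    by (auto simp: r_ann_def)
  then show "?\<rho> \<subseteq> r_ann T a"
    by (rule right_congruence_gen_least[OF right_congruence_r_ann[OF assms(3)]])
  have \<rho>: "right_congruence T ?\<rho>"
    using assms(3) by (intro right_congruence_right_congruence_gen) auto
  have "X \<subseteq> r_ann_refined S T a ?\<rho>"
  proof (rule subrelI)
    fix c d assume "(c, d) \<in> X"
    then have cd: "c \<in> S" "d \<in> S" "a * c = a * d"
      using X_r_ann by (auto simp: r_ann_def)
    have "(c, d) \<in> ?\<rho>" if "a * c \<in> T"
    proof -
      have "c \<in> T" "d \<in> T"
        using that cd mult_in_complement_ideal_factors(2)[OF assms(4) \<open>a \<in> S\<close>] by metis+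
      with \<open>(c, d) \<in> X\<close> show ?thesis
        using right_congruence_gen_upper[of "X \<inter> T \<times> T" T] by blast
    qed
    then show "(c, d) \<in> r_ann_refined S T a ?\<rho>"
      using cd by (simp add: r_ann_refined_def r_ann_def)
  qed
  then have r_ann_S: "r_ann S a \<subseteq> r_ann_refined S T a ?\<rho>"
    unfolding X(2)
    by (rule right_congruence_gen_least[OF right_congruence_r_ann_refined[OF assms(1,4) \<open>a \<in> S\<close> \<rho>]])
  show "r_ann T a \<subseteq> ?\<rho>"
  proof
    fix p assume "p \<in> r_ann T a"
    then obtain s t where p: "p = (s, t)" "s \<in> T" "t \<in> T" "a * s = a * t"
      by (auto simp: r_ann_def)
    then have "p \<in> r_ann_refined S T a ?\<rho>"
      using r_ann_S assms(2) by (auto simp: r_ann_def)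
    moreover have "a * s \<in> T"
      using assms(3,5) p by (simp add: subsemigroup_def)
    ultimately show "p \<in> ?\<rho>"
      using p by (simp add: r_ann_refined_def)
  qed
qed

theorem mainTheorem16:
  fixes S T :: "'a::semigroup_mult set"
  assumes "subsemigroup S"
    and "T \<subseteq> S"
    and "subsemigroup T"
    and "semigroup_ideal S (S - T)"
    and "finitely_right_equated S"
  shows "finitely_right_equated T"
  unfolding finitely_right_equated_def
proof
  fix a assume "a \<in> T"
  with assms(2,5) have "fg_right_congruence S (r_ann S a)"
    by (auto simp: finitely_right_equated_def)
  then obtain X where "finite X" "X \<subseteq> S \<times> S" "r_ann S a = right_congruence_gen S X"
    unfolding fg_right_congruence_def by blast
  with \<open>a \<in> T\<close> have "r_ann T a = right_congruence_gen T (X \<inter> T \<times> T)"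
    using r_ann_eq_right_congruence_gen_restrict[OF assms(1-4)] by blast
  with \<open>finite X\<close> show "fg_right_congruence T (r_ann T a)"
    unfolding fg_right_congruence_def by blast
qed

end
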